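(* Let $q\in\mathbb{C}$, let $c_i(q,\pi)\in\mathbb{C}$ ($p\ge1$, $1\le i\le p$, $\pi\in\mathfrak{S}_p$) be coefficients, and for $p\ge1$ let $$\mathcal{E}_p=\sum_{k_1,\ldots,k_p}\sum_{\pi\in\mathfrak{S}_p}\sum_{i=1}^p c_i(q,\pi)\,E(k_{\pi(i)})\,a^\dagger(k_{\pi(p)})\cdots a^\dagger(k_{\pi(1)})\,a(k_1)\cdots a(k_p),$$ and $$R_p(q,X)=\alpha_p\sum_{\pi\in\mathfrak{S}_p}\sum_{i=1}^p c_i(q,\pi)X^{i-1}\pi\in\mathbb{C}[X][\mathfrak{S}_p].$$ Then for every $n$-particle state $K$ (an ordered $n$-tuple of distinct momenta) and every $1\le p\le n$, $$\mathcal{E}_pK=\xi\Bigl(X^{n-p}\sum_{J\subset K,\ |J|=p}q^{I_K\left((K-J)\sqcup J\right)}\,(K-J)\sqcup R_p(q,X)J\Bigr).$$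
   Context: Operators $a(k)$, indexed by momenta $k$, with adjoints $a^\dagger(k)$, satisfy $a(k)a^\dagger(\ell)-q\,a^\dagger(\ell)a(k)=\delta_{k,\ell}$ and $a(k)|0\rangle=0$. An ordered set $K=[k_1,\dots,k_n]$ of pairwise distinct momenta is identified with the state $a^\dagger(k_n)\cdots a^\dagger(k_1)|0\rangle$, and formal linear combinations of such ordered sets with the corresponding linear combinations of states. $E(k)$ is the single-particle energy of momentum $k$. For $\pi\in\mathfrak{S}_n$, $I(\pi)$ is the number of inversions (pairs $i<j$ with $\pi(i)>\pi(j)$); $\alpha_p=\sum_{\rho\in\mathfrak{S}_p}q^{I(\rho)}\rho\in\mathbb{C}[\mathfrak{S}_p]$. The group $\mathfrak{S}_n$ acts on ordered $n$-element sets by permuting positions, extended linearly to the group algebra and to polynomials in $X$ (with $X$ commuting). For an ordered set $A$ and $\sigma\in\mathfrak{S}_n$, $I_A(\sigma A):=I(\sigma)$. A subset $J\subset K$ carries the order induced from $K$; $K-J$ is the complement with induced order; for disjoint ordered sets $A_1,A_2$, $A_1\sqcup A_2$ is the ordered set listing the elements of $A_1$ (in order) followed by those of $A_2$ (in order), extended bilinearly (and with powers of $X$ carried along) to linear combinations. The evaluation map $\xi$ is the linear map on polynomials in $X$ with coefficients formal linear combinations of ordered $n$-sets defined by $\xi(B\,X^{i-1})=E(B(i))\,B$, where $B(i)$ is the $i$-th element of the ordered set $B$. *)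

theory Defs
  imports Complex_Main "HOL-Library.Function_Algebras" "HOL-Library.Groups_Big_Fun"
    "HOL-Combinatorics.Permutations"
begin

(* Fock space: formal linear combinations of words (lists) of momenta,
   represented as coefficient functions.  The word [k1,...,kn] is the state
   a\<^sup>\<dagger>(kn)...a\<^sup>\<dagger>(k1)|0>. *)
type_synonym 'm vec = "'m list \<Rightarrow> complex"

definition vac :: "'m vec" where
  "vac = (\<lambda>w. if w = [] then 1 else 0)"

definition create :: "'m \<Rightarrow> 'm vec \<Rightarrow> 'm vec" where
  "create k v = (\<lambda>w. if w \<noteq> [] \<and> last w = k then v (butlast w) else 0)"

(* annihilation operator a(k): the q-Fock representation, determined by
   a(k)a\<^sup>\<dagger>(l) - q a\<^sup>\<dagger>(l)a(k) = \<delta>_{k,l} and a(k)|0> = 0 *)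
definition annih :: "complex \<Rightarrow> 'm \<Rightarrow> 'm vec \<Rightarrow> 'm vec" where
  "annih q k v = (\<lambda>w. \<Sum>j\<le>length w. q ^ (length w - j) * v (take j w @ k # drop j w))"

definition ket :: "'m list \<Rightarrow> 'm vec" where
  "ket K = fold create K vac"

definition perms :: "nat \<Rightarrow> (nat \<Rightarrow> nat) set" where
  "perms p = {\<sigma>. \<sigma> permutes {1..p}}"

definition inv_count :: "nat \<Rightarrow> (nat \<Rightarrow> nat) \<Rightarrow> nat" where
  "inv_count p \<sigma> = card {(i, j). 1 \<le> i \<and> i < j \<and> j \<le> p \<and> \<sigma> i > \<sigma> j}"

definition act :: "(nat \<Rightarrow> nat) \<Rightarrow> 'm list \<Rightarrow> 'm list" where
  "act \<sigma> A = map (\<lambda>i. A ! (\<sigma> i - 1)) [1..<length A + 1]"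

definition IA :: "'m list \<Rightarrow> 'm list \<Rightarrow> nat" where
  "IA A B = inv_count (length A) (THE \<sigma>. \<sigma> permutes {1..length A} \<and> act \<sigma> A = B)"

definition Eop :: "(nat \<Rightarrow> nat \<Rightarrow> (nat \<Rightarrow> nat) \<Rightarrow> complex) \<Rightarrow> ('m \<Rightarrow> complex) \<Rightarrow> complex
    \<Rightarrow> nat \<Rightarrow> 'm vec \<Rightarrow> 'm vec" where
  "Eop c E q p v = (\<Sum>ks. if length ks = p then
      (\<Sum>\<pi>\<in>perms p. (\<lambda>w. (\<Sum>i=1..p. c p i \<pi> * E (ks ! (\<pi> i - 1))) *
          fold create (map (\<lambda>i. ks ! (\<pi> i - 1)) [1..<p+1]) (foldr (annih q) ks v) w))
      else 0)"

(* polynomials in X with coefficients in formal combinations of ordered sets: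
   P e B = coefficient of B X^e *)
type_synonym 'm xvec = "nat \<Rightarrow> 'm list \<Rightarrow> complex"

(* evaluation map \<xi>(B X^(i-1)) = E(B(i)) B *)
definition xi :: "('m \<Rightarrow> complex) \<Rightarrow> 'm xvec \<Rightarrow> 'm vec" where
  "xi E P = (\<lambda>B. \<Sum>e<length B. E (B ! e) * P e B)"

(* elements of C[X][S_p]: g \<sigma> e = coefficient of X^e \<sigma> *)
type_synonym galg = "(nat \<Rightarrow> nat) \<Rightarrow> nat \<Rightarrow> complex"

definition ga_mult :: "nat \<Rightarrow> galg \<Rightarrow> galg \<Rightarrow> galg" where
  "ga_mult p g h = (\<lambda>\<sigma> e. \<Sum>\<rho>\<in>perms p. \<Sum>\<pi>\<in>perms p.
      if \<rho> \<circ> \<pi> = \<sigma> then (\<Sum>a\<le>e. g \<rho> a * h \<pi> (e - a)) else 0)"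

definition alpha :: "complex \<Rightarrow> nat \<Rightarrow> galg" where
  "alpha q p = (\<lambda>\<sigma> e. if \<sigma> \<in> perms p \<and> e = 0 then q ^ inv_count p \<sigma> else 0)"

definition Rsum :: "(nat \<Rightarrow> nat \<Rightarrow> (nat \<Rightarrow> nat) \<Rightarrow> complex) \<Rightarrow> nat \<Rightarrow> galg" where
  "Rsum c p = (\<lambda>\<pi> e. if \<pi> \<in> perms p then (\<Sum>i=1..p. if e = i - 1 then c p i \<pi> else 0) else 0)"

definition Rp :: "(nat \<Rightarrow> nat \<Rightarrow> (nat \<Rightarrow> nat) \<Rightarrow> complex) \<Rightarrow> complex \<Rightarrow> nat \<Rightarrow> galg" where
  "Rp c q p = ga_mult p (alpha q p) (Rsum c p)"

definition ga_act :: "nat \<Rightarrow> galg \<Rightarrow> 'm list \<Rightarrow> 'm xvec" where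
  "ga_act p g J = (\<lambda>e B. \<Sum>\<sigma>\<in>perms p. if act \<sigma> J = B then g \<sigma> e else 0)"

definition conc :: "'m list \<Rightarrow> 'm xvec \<Rightarrow> 'm xvec" where
  "conc L P = (\<lambda>e B. if take (length L) B = L then P e (drop (length L) B) else 0)"

definition Xpow :: "nat \<Rightarrow> 'm xvec \<Rightarrow> 'm xvec" where
  "Xpow m P = (\<lambda>e B. if m \<le> e then P (e - m) B else 0)"

end

theory Submission
  imports Defs
begin

text \<open>
  On the basis state K the annihilators a(k_1) ... a(k_p) act nontrivially only when the k_i are
  distinct elements of K; they delete them and produce q^N, where N counts the pairs (x, y) such
  that y still stands to the right of x when a(x) acts. Writing the annihilated tuple as \<tau>J, with
  J \<subseteq> K listed in the order of K and \<tau> \<in> S_p, the exponent splits as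
  N = I_K((K - J) \<squnion> J) + I(\<tau>). The creators then build (K - J) \<squnion> (\<tau>\<pi>)J, so the sum of
  q^I(\<tau>) over \<tau> is exactly the factor \<alpha>_p of R_p(q, X); the maps \<xi> and X^(n-p) only attach
  the energy of the i-th entry of the created block.
\<close>

section \<open>Creation and annihilation on basis states\<close>

definition basis_vec :: "'m list \<Rightarrow> 'm vec" where
  "basis_vec U = (\<lambda>w. if w = U then 1 else 0)"

lemma sum_apply: "sum f A x = (\<Sum>a\<in>A. f a x)"
  by (induction A rule: infinite_finite_induct) auto

lemma create_scaled: "create k (\<lambda>w. c * v w) = (\<lambda>w. c * create k v w)"
  by (simp add: create_def fun_eq_iff)

lemma create_basis_vec: "create k (basis_vec U) = basis_vec (U @ [k])"
  by (auto simp: create_def basis_vec_def fun_eq_iff)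

lemma fold_create_scaled: "fold create L (\<lambda>w. c * v w) = (\<lambda>w. c * fold create L v w)"
  by (induction L arbitrary: v) (simp_all add: create_scaled)

lemma fold_create_basis_vec: "fold create L (basis_vec U) = basis_vec (U @ L)"
  by (induction L arbitrary: U) (simp_all add: create_basis_vec)

lemma ket_eq_basis_vec: "ket K = basis_vec K"
  using fold_create_basis_vec[of K "[]"] by (simp add: ket_def vac_def basis_vec_def)

lemma annih_scaled: "annih q k (\<lambda>w. c * v w) = (\<lambda>w. c * annih q k v w)"
  by (simp add: annih_def fun_eq_iff sum_distrib_left mult_ac)

section \<open>The q-factor of a product of annihilators\<close>

fun precedes :: "'a list \<Rightarrow> 'a \<Rightarrow> 'a \<Rightarrow> bool" where
  "precedes [] x y = False"
| "precedes (a # L) x y = ((a = x \<and> y \<in> set L) \<or> precedes L x y)"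

lemma precedes_filter: "precedes (filter P L) x y \<longleftrightarrow> P x \<and> P y \<and> precedes L x y"
  by (induction L) auto

lemma precedes_append:
  "precedes (A @ B) x y \<longleftrightarrow> precedes A x y \<or> precedes B x y \<or> (x \<in> set A \<and> y \<in> set B)"
  by (induction A) auto

lemma precedes_set: "precedes L x y \<Longrightarrow> x \<in> set L \<and> y \<in> set L"
  by (induction L) auto

lemma precedes_irrefl: "distinct L \<Longrightarrow> \<not> precedes L x x"
  by (induction L) (auto dest: precedes_set)

lemma precedes_asym: "distinct L \<Longrightarrow> precedes L x y \<Longrightarrow> \<not> precedes L y x"
  by (induction L) (auto dest: precedes_set)

lemma precedes_nth:
  "distinct L \<Longrightarrow> i < length L \<Longrightarrow> j < length L \<Longrightarrow> precedes L (L ! i) (L ! j) \<longleftrightarrow> i < j"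
proof (induction L arbitrary: i j)
  case (Cons a L)
  then show ?case
    by (cases i; cases j) (auto dest: precedes_set)
qed simp

lemma annih_basis_vec_split:
  assumes "distinct (a @ k # b)"
  shows "annih q k (basis_vec (a @ k # b)) = (\<lambda>w. q ^ length b * basis_vec (a @ b) w)"
proof
  fix w
  have split_iff: "take j w @ k # drop j w = a @ k # b \<longleftrightarrow> j = length a \<and> w = a @ b"
    if "j \<le> length w" for j
  proof
    assume split: "take j w @ k # drop j w = a @ k # b"
    then have "distinct (take j w @ k # drop j w)"
      using assms by simp
    then have "k \<notin> set (take j w)" "k \<notin> set (drop j w)"
      by auto
    then have "take j w = a \<and> drop j w = b"
      using split append_Cons_eq_iff by metis
    then show "j = length a \<and> w = a @ b"
      using that by (metis append_take_drop_id length_take min.absorb2)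
  qed simp
  have "annih q k (basis_vec (a @ k # b)) w
      = (\<Sum>j\<le>length w. if j = length a \<and> w = a @ b then q ^ (length w - j) else 0)"
    unfolding annih_def basis_vec_def by (rule sum.cong) (use split_iff in auto)
  also have "\<dots> = q ^ length b * basis_vec (a @ b) w"
    by (auto simp: basis_vec_def)
  finally show "annih q k (basis_vec (a @ k # b)) w = q ^ length b * basis_vec (a @ b) w" .
qed

lemma annih_basis_vec:
  assumes "distinct U"
  shows "annih q k (basis_vec U) = (\<lambda>w. (if k \<in> set U then q ^ card {y. precedes U k y} else 0)
    * basis_vec (filter (\<lambda>x. x \<noteq> k) U) w)"
proof (cases "k \<in> set U")
  case True
  then obtain a b where U: "U = a @ k # b"
    by (meson split_list)
  moreover have "filter (\<lambda>x. x \<noteq> k) a = a" "filter (\<lambda>x. x \<noteq> k) b = b"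
    using assms U by (auto simp: filter_id_conv)
  ultimately have "filter (\<lambda>x. x \<noteq> k) U = a @ b" and "{y. precedes U k y} = set b"
    using assms by (auto simp: precedes_append dest: precedes_set)
  then show ?thesis
    using annih_basis_vec_split assms True U by (simp add: distinct_card)
next
  case False
  then show ?thesis
    by (auto simp: annih_def basis_vec_def fun_eq_iff intro!: sum.neutral)
qed

text \<open>A pair (x, y) is counted when y still stands to the right of x at the moment a(x) acts;
  in \<^term>\<open>foldr (annih q) ks\<close> the last entry of ks acts first.\<close>

definition annih_exponent :: "'a list \<Rightarrow> 'a list \<Rightarrow> nat" where
  "annih_exponent K ks =
    card {(x, y). x \<in> set ks \<and> precedes K x y \<and> (y \<notin> set ks \<or> precedes ks y x)}"

lemma annih_exponent_Cons:
  assumes "distinct K" and "k \<notin> set ks"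
  shows "annih_exponent K (k # ks) = card {y. y \<notin> set ks \<and> precedes K k y} + annih_exponent K ks"
proof -
  let ?new = "Pair k ` {y. y \<notin> set ks \<and> precedes K k y}"
  let ?old = "{(x, y). x \<in> set ks \<and> precedes K x y \<and> (y \<notin> set ks \<or> precedes ks y x)}"
  have split: "{(x, y). x \<in> set (k # ks) \<and> precedes K x y \<and> (y \<notin> set (k # ks) \<or> precedes (k # ks) y x)}
      = ?new \<union> ?old"
    using assms by (auto dest: precedes_set simp: precedes_irrefl)
  have "finite ?old"
    by (rule finite_subset[of _ "set K \<times> set K"]) (auto dest: precedes_set)
  moreover have "finite ?new"
    by (rule finite_subset[of _ "set K \<times> set K"]) (auto dest: precedes_set)
  moreover have "?new \<inter> ?old = {}"
    using assms(2) by auto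
  ultimately show ?thesis
    unfolding annih_exponent_def split by (simp add: card_Un_disjoint card_image inj_on_def)
qed

lemma foldr_annih_basis_vec:
  assumes "distinct K"
  shows "foldr (annih q) ks (basis_vec K) = (\<lambda>w.
    (if distinct ks \<and> set ks \<subseteq> set K then q ^ annih_exponent K ks else 0)
      * basis_vec (filter (\<lambda>x. x \<notin> set ks) K) w)"
proof (induction ks)
  case Nil
  then show ?case by (simp add: annih_exponent_def)
next
  case (Cons k ks)
  define K' where "K' = filter (\<lambda>x. x \<notin> set ks) K"
  define c where "c = (if distinct ks \<and> set ks \<subseteq> set K then q ^ annih_exponent K ks else 0)"
  have "distinct K'"
    using assms by (simp add: K'_def)
  have "k \<in> set K' \<longleftrightarrow> k \<in> set K \<and> k \<notin> set ks"
    by (simp add: K'_def)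
  moreover have "filter (\<lambda>x. x \<noteq> k) K' = filter (\<lambda>x. x \<notin> set (k # ks)) K"
    by (auto simp: K'_def intro: filter_cong)
  moreover have "{y. precedes K' k y} = {y. y \<notin> set ks \<and> precedes K k y}" if "k \<notin> set ks"
    using that by (auto simp: K'_def precedes_filter)
  moreover have "foldr (annih q) (k # ks) (basis_vec K) = (\<lambda>w. c * annih q k (basis_vec K') w)"
    using Cons.IH by (simp add: annih_scaled K'_def c_def)
  ultimately show ?case
    using assms by (auto simp: annih_basis_vec[OF \<open>distinct K'\<close>] c_def annih_exponent_Cons
        power_add fun_eq_iff)
qed

section \<open>Permuting positions and counting inversions\<close>

lemma length_act [simp]: "length (act \<sigma> L) = length L"
  by (simp add: act_def del: upt_Suc)

lemma nth_act: "i < length L \<Longrightarrow> act \<sigma> L ! i = L ! (\<sigma> (Suc i) - 1)"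
  by (simp add: act_def del: upt_Suc)

lemma nth_act_pred: "1 \<le> i \<Longrightarrow> i \<le> length L \<Longrightarrow> act \<sigma> L ! (i - 1) = L ! (\<sigma> i - 1)"
  using nth_act[of "i - 1" L \<sigma>] by simp

lemma permutes_interval_range:
  "\<sigma> permutes {1..n} \<Longrightarrow> 1 \<le> i \<Longrightarrow> i \<le> n \<Longrightarrow> 1 \<le> \<sigma> i \<and> \<sigma> i \<le> n"
  using permutes_in_image[of \<sigma> "{1..n}" i] by simp

lemma act_comp:
  assumes "\<pi> permutes {1..length L}"
  shows "act \<pi> (act \<tau> L) = act (\<tau> \<circ> \<pi>) L"
proof (rule nth_equalityI)
  fix i
  assume "i < length (act \<pi> (act \<tau> L))"
  then have i: "i < length L" and "1 \<le> \<pi> (Suc i) \<and> \<pi> (Suc i) \<le> length L"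
    using permutes_interval_range[OF assms, of "Suc i"] by simp_all
  then have "\<pi> (Suc i) - 1 < length L" and "Suc (\<pi> (Suc i) - 1) = \<pi> (Suc i)"
    by linarith+
  then have "act \<tau> L ! (\<pi> (Suc i) - 1) = L ! (\<tau> (\<pi> (Suc i)) - 1)"
    by (simp add: nth_act)
  then show "act \<pi> (act \<tau> L) ! i = act (\<tau> \<circ> \<pi>) L ! i"
    using i by (simp add: nth_act)
qed simp

text \<open>\<^const>\<open>act\<close> numbers positions by {1..n}, \<^const>\<open>permute_list\<close> by {..<n}; the two
  conventions are conjugate under \<^const>\<open>Suc\<close>.\<close>

lemma permute_list_as_act:
  assumes "\<pi> permutes {..<length L}"
  obtains \<sigma> where "\<sigma> permutes {1..length L}" and "act \<sigma> L = permute_list \<pi> L"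
proof
  let ?n = "length L"
  have "bij_betw Suc {..<?n} {1..?n}"
    by (simp add: image_Suc_lessThan)
  then show "(\<lambda>x. if x \<in> {1..?n} then Suc (\<pi> (inv_into {..<?n} Suc x)) else x) permutes {1..?n}"
    by (rule permutes_bij_inv_into[OF assms])
  show "act (\<lambda>x. if x \<in> {1..?n} then Suc (\<pi> (inv_into {..<?n} Suc x)) else x) L = permute_list \<pi> L"
    by (rule nth_equalityI) (simp_all add: nth_act permute_list_nth[OF assms])
qed

lemma act_as_permute_list:
  assumes "\<sigma> permutes {1..length L}"
  obtains \<pi> where "\<pi> permutes {..<length L}" and "act \<sigma> L = permute_list \<pi> L"
proof
  let ?n = "length L"
  define \<pi> where "\<pi> x = (if x \<in> {..<?n} then \<sigma> (inv_into {1..?n} (\<lambda>x. x - 1) x) - 1 else x)" for x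
  have inj: "inj_on (\<lambda>x. x - 1) {1..?n}"
    by (auto simp: inj_on_def)
  have "(\<lambda>x. x - 1) ` {1..?n} = {..<?n}"
    by (auto simp: image_iff intro!: bexI[where x="Suc _"])
  with inj have "bij_betw (\<lambda>x. x - 1) {1..?n} {..<?n}"
    by (simp add: bij_betw_def)
  then show perm: "\<pi> permutes {..<?n}"
    unfolding \<pi>_def by (rule permutes_bij_inv_into[OF assms])
  have "\<pi> i = \<sigma> (Suc i) - 1" if "i < ?n" for i
    using inv_into_f_f[OF inj, of "Suc i"] that by (simp add: \<pi>_def)
  then show "act \<sigma> L = permute_list \<pi> L"
    by (intro nth_equalityI) (simp_all add: nth_act permute_list_nth[OF perm])
qed

lemma act_inj_on:
  assumes "distinct L"
  shows "inj_on (\<lambda>\<sigma>. act \<sigma> L) {\<sigma>. \<sigma> permutes {1..length L}}"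
proof (rule inj_onI, rule ext)
  fix \<sigma> \<sigma>' i
  assume \<sigma>: "\<sigma> \<in> {\<sigma>. \<sigma> permutes {1..length L}}" and \<sigma>': "\<sigma>' \<in> {\<sigma>. \<sigma> permutes {1..length L}}"
    and eq: "act \<sigma> L = act \<sigma>' L"
  show "\<sigma> i = \<sigma>' i"
  proof (cases "i \<in> {1..length L}")
    case True
    then have "1 \<le> \<sigma> i \<and> \<sigma> i \<le> length L" "1 \<le> \<sigma>' i \<and> \<sigma>' i \<le> length L"
      using \<sigma> \<sigma>' permutes_interval_range[of _ "length L" i] by auto
    moreover have "L ! (\<sigma> i - 1) = L ! (\<sigma>' i - 1)"
      using arg_cong[OF eq, of "\<lambda>M. M ! (i - 1)"] True nth_act_pred[of i L] by simp
    ultimately have "\<sigma> i - 1 = \<sigma>' i - 1"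
      using nth_eq_iff_index_eq[OF assms, of "\<sigma> i - 1" "\<sigma>' i - 1"] by auto
    with \<open>1 \<le> \<sigma> i \<and> _\<close> \<open>1 \<le> \<sigma>' i \<and> _\<close> show ?thesis
      by linarith
  next
    case False
    then show ?thesis
      using \<sigma> \<sigma>' by (simp add: permutes_not_in)
  qed
qed

lemma bij_betw_act:
  assumes "distinct L"
  shows "bij_betw (\<lambda>\<sigma>. act \<sigma> L) {\<sigma>. \<sigma> permutes {1..length L}} {M. distinct M \<and> set M = set L}"
  unfolding bij_betw_def
proof (intro conjI act_inj_on[OF assms] equalityI subsetI)
  fix M
  assume "M \<in> (\<lambda>\<sigma>. act \<sigma> L) ` {\<sigma>. \<sigma> permutes {1..length L}}"
  then obtain \<sigma> where "\<sigma> permutes {1..length L}" and "M = act \<sigma> L"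
    by blast
  moreover obtain \<pi> where "\<pi> permutes {..<length L}" and "act \<sigma> L = permute_list \<pi> L"
    using act_as_permute_list[OF \<open>\<sigma> permutes _\<close>] by blast
  ultimately show "M \<in> {M. distinct M \<and> set M = set L}"
    using assms by simp
next
  fix M
  assume "M \<in> {M. distinct M \<and> set M = set L}"
  then have "mset M = mset L"
    using assms set_eq_iff_mset_eq_distinct by blast
  then obtain \<pi> where "\<pi> permutes {..<length L}" and "permute_list \<pi> L = M"
    by (rule mset_eq_permutation)
  moreover obtain \<sigma> where "\<sigma> permutes {1..length L}" and "act \<sigma> L = permute_list \<pi> L"
    using permute_list_as_act[OF \<open>\<pi> permutes _\<close>] by blast
  ultimately show "M \<in> (\<lambda>\<sigma>. act \<sigma> L) ` {\<sigma>. \<sigma> permutes {1..length L}}"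
    by (metis (mono_tags, lifting) image_eqI mem_Collect_eq)
qed

lemma distinct_set_act:
  assumes "distinct L" and "\<sigma> permutes {1..length L}"
  shows "distinct (act \<sigma> L)" and "set (act \<sigma> L) = set L"
  using bij_betw_apply[OF bij_betw_act[OF assms(1)], of \<sigma>] assms(2) by simp_all

definition inversions :: "'a list \<Rightarrow> 'a list \<Rightarrow> ('a \<times> 'a) set" where
  "inversions L M = {(x, y). precedes L x y \<and> precedes M y x}"

lemma card_inversions_act:
  assumes L: "distinct L" and \<sigma>: "\<sigma> permutes {1..length L}"
  shows "inv_count (length L) \<sigma> = card (inversions L (act \<sigma> L))"
proof -
  let ?n = "length L" and ?M = "act \<sigma> L"
  let ?I = "{1..?n} \<times> {1..?n}"
  define h where "h = (\<lambda>(i, j). (?M ! (j - 1), ?M ! (i - 1)))"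
  have M: "distinct ?M" "set ?M = set L"
    using distinct_set_act[OF assms] by simp_all
  have M_nth: "?M ! (i - 1) = L ! (\<sigma> i - 1)" if "i \<in> {1..?n}" for i
    using that nth_act_pred[of i L \<sigma>] by simp
  have h_inversion: "h (i, j) \<in> inversions L ?M \<longleftrightarrow> i < j \<and> \<sigma> j < \<sigma> i" if "(i, j) \<in> ?I" for i j
  proof -
    have "1 \<le> \<sigma> i \<and> \<sigma> i \<le> ?n" "1 \<le> \<sigma> j \<and> \<sigma> j \<le> ?n"
      using that permutes_interval_range[OF \<sigma>] by auto
    then have "precedes L (L ! (\<sigma> j - 1)) (L ! (\<sigma> i - 1)) \<longleftrightarrow> \<sigma> j < \<sigma> i"
      using precedes_nth[OF L, of "\<sigma> j - 1" "\<sigma> i - 1"] by linarith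
    moreover have "precedes ?M (?M ! (i - 1)) (?M ! (j - 1)) \<longleftrightarrow> i < j"
      using that precedes_nth[OF M(1), of "i - 1" "j - 1"] by (auto simp: less_diff_conv2)
    ultimately show ?thesis
      using that M_nth by (auto simp: h_def inversions_def)
  qed
  have covered: "inversions L ?M \<subseteq> h ` ?I"
  proof
    fix z
    assume "z \<in> inversions L ?M"
    then obtain x y where z: "z = (x, y)" and "x \<in> set ?M" "y \<in> set ?M"
      by (auto simp: inversions_def dest: precedes_set)
    then obtain i j where "i < ?n" "j < ?n" "x = ?M ! j" "y = ?M ! i"
      by (metis in_set_conv_nth length_act)
    then show "z \<in> h ` ?I"
      using z by (intro image_eqI[of _ _ "(Suc i, Suc j)"]) (auto simp: h_def)
  qed
  have "inversions L ?M = h ` {(i, j) \<in> ?I. i < j \<and> \<sigma> j < \<sigma> i}"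
  proof (intro equalityI subsetI)
    fix z
    assume "z \<in> inversions L ?M"
    with covered obtain i j where "(i, j) \<in> ?I" "z = h (i, j)"
      by blast
    with h_inversion \<open>z \<in> _\<close> show "z \<in> h ` {(i, j) \<in> ?I. i < j \<and> \<sigma> j < \<sigma> i}"
      by blast
  qed (use h_inversion in blast)
  moreover have "inj_on h {(i, j) \<in> ?I. i < j \<and> \<sigma> j < \<sigma> i}"
  proof (rule inj_on_subset)
    have "inj_on (\<lambda>i. ?M ! (i - 1)) {1..?n}"
      using M(1) by (auto simp: inj_on_def nth_eq_iff_index_eq)
    then show "inj_on h ?I"
      unfolding inj_on_def h_def by auto
  qed auto
  ultimately have "card (inversions L ?M) = card {(i, j) \<in> ?I. i < j \<and> \<sigma> j < \<sigma> i}"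
    by (simp add: card_image)
  also have "{(i, j) \<in> ?I. i < j \<and> \<sigma> j < \<sigma> i} = {(i, j). 1 \<le> i \<and> i < j \<and> j \<le> ?n \<and> \<sigma> i > \<sigma> j}"
    by auto
  finally show ?thesis
    by (simp add: inv_count_def)
qed

lemma IA_eq_card_inversions:
  assumes "distinct L" and "distinct M" and "set M = set L"
  shows "IA L M = card (inversions L M)"
proof -
  have "M \<in> (\<lambda>\<sigma>. act \<sigma> L) ` {\<sigma>. \<sigma> permutes {1..length L}}"
    using bij_betw_act[OF assms(1)] assms(2,3) by (simp add: bij_betw_def)
  then obtain \<sigma> where \<sigma>: "\<sigma> permutes {1..length L}" and M: "act \<sigma> L = M"
    by blast
  have "(THE \<sigma>. \<sigma> permutes {1..length L} \<and> act \<sigma> L = M) = \<sigma>"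
    using \<sigma> M act_inj_on[OF assms(1)] by (intro the_equality) (auto simp: inj_on_def)
  then show ?thesis
    using card_inversions_act[OF assms(1) \<sigma>] M by (simp add: IA_def)
qed

lemma inversions_filter_append:
  assumes "distinct K"
  shows "inversions K (filter (\<lambda>x. x \<notin> S) K @ filter (\<lambda>x. x \<in> S) K)
    = {(x, y). x \<in> S \<and> y \<notin> S \<and> precedes K x y}"
  using assms
  by (auto simp: inversions_def precedes_append precedes_filter dest: precedes_asym precedes_set)

lemma annih_exponent_act:
  assumes K: "distinct K" and J: "J = filter (\<lambda>x. x \<in> S) K" and \<tau>: "\<tau> permutes {1..length J}"
  shows "annih_exponent K (act \<tau> J) = IA K (filter (\<lambda>x. x \<notin> S) K @ J) + inv_count (length J) \<tau>"
proof -
  let ?outer = "{(x, y). x \<in> S \<and> y \<notin> S \<and> precedes K x y}"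
  have "distinct J"
    using K J by simp
  then have set_act_J: "set (act \<tau> J) = set J"
    using distinct_set_act \<tau> by blast
  have split: "{(x, y). x \<in> set (act \<tau> J) \<and> precedes K x y \<and> (y \<notin> set (act \<tau> J) \<or> precedes (act \<tau> J) y x)}
      = ?outer \<union> inversions J (act \<tau> J)"
    unfolding set_act_J using J
    by (auto simp: inversions_def precedes_filter dest: precedes_set)
  have "finite ?outer" "finite (inversions J (act \<tau> J))"
    by (rule finite_subset[of _ "set K \<times> set K"]; use J in \<open>auto simp: inversions_def dest: precedes_set\<close>)+
  moreover have "?outer \<inter> inversions J (act \<tau> J) = {}"
    using J by (auto simp: inversions_def precedes_filter)
  moreover have "distinct (filter (\<lambda>x. x \<notin> S) K @ J)" "set (filter (\<lambda>x. x \<notin> S) K @ J) = set K"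
    using K J by auto
  then have "card ?outer = IA K (filter (\<lambda>x. x \<notin> S) K @ J)"
    using IA_eq_card_inversions[OF K] inversions_filter_append[OF K] J by simp
  ultimately show ?thesis
    unfolding annih_exponent_def split
    by (simp add: card_Un_disjoint card_inversions_act[OF \<open>distinct J\<close> \<tau>])
qed

section \<open>Both sides as sums over subsets\<close>

definition weighted_energy ::
    "(nat \<Rightarrow> nat \<Rightarrow> (nat \<Rightarrow> nat) \<Rightarrow> complex) \<Rightarrow> ('m \<Rightarrow> complex) \<Rightarrow> nat \<Rightarrow> (nat \<Rightarrow> nat) \<Rightarrow> 'm list \<Rightarrow> complex"
  where "weighted_energy c E p \<pi> M = (\<Sum>i=1..p. c p i \<pi> * E (M ! (i - 1)))"

lemma finite_perms: "finite (perms p)"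
  unfolding perms_def by (rule finite_permutations) simp

lemma finite_distinct_lists_length_eq:
  "finite {ks. set ks \<subseteq> set K \<and> length ks = p \<and> distinct ks}"
  by (rule finite_subset[OF _ finite_lists_length_eq[OF finite_set, of K p]]) auto

lemma Eop_ket_apply:
  assumes "distinct K"
  shows "Eop c E q p (ket K) w =
    (\<Sum>ks\<in>{ks. set ks \<subseteq> set K \<and> length ks = p \<and> distinct ks}. \<Sum>\<pi>\<in>perms p.
       q ^ annih_exponent K ks * weighted_energy c E p \<pi> (act \<pi> ks)
         * basis_vec (filter (\<lambda>x. x \<notin> set ks) K @ act \<pi> ks) w)"
proof -
  let ?lists = "{ks. set ks \<subseteq> set K \<and> length ks = p \<and> distinct ks}"
  define F where "F ks = (if length ks = p then (\<Sum>\<pi>\<in>perms p. (\<lambda>w.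
      (\<Sum>i=1..p. c p i \<pi> * E (ks ! (\<pi> i - 1))) *
      fold create (map (\<lambda>i. ks ! (\<pi> i - 1)) [1..<p+1]) (foldr (annih q) ks (ket K)) w))
    else 0)" for ks
  have act_ks: "map (\<lambda>i. ks ! (\<pi> i - 1)) [1..<p+1] = act \<pi> ks"
    if "length ks = p" for ks :: "'a list" and \<pi> :: "nat \<Rightarrow> nat"
    using that by (simp add: act_def)
  have energy_ks: "(\<Sum>i=1..p. c p i \<pi> * E (ks ! (\<pi> i - 1))) = weighted_energy c E p \<pi> (act \<pi> ks)"
    if "length ks = p" for ks and \<pi> :: "nat \<Rightarrow> nat"
    using that nth_act_pred[of _ ks \<pi>] by (auto simp: weighted_energy_def intro!: sum.cong)
  have F: "F ks = (\<lambda>w. \<Sum>\<pi>\<in>perms p. (if ks \<in> ?lists then q ^ annih_exponent K ks else 0)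
      * weighted_energy c E p \<pi> (act \<pi> ks) * basis_vec (filter (\<lambda>x. x \<notin> set ks) K @ act \<pi> ks) w)"
    if "length ks = p" for ks
  proof -
    have "F ks = (\<lambda>w. \<Sum>\<pi>\<in>perms p. weighted_energy c E p \<pi> (act \<pi> ks)
        * fold create (act \<pi> ks) (foldr (annih q) ks (basis_vec K)) w)"
      unfolding F_def ket_eq_basis_vec act_ks[OF that] energy_ks[OF that]
      using that by (simp add: sum_apply fun_eq_iff)
    then show ?thesis
      unfolding foldr_annih_basis_vec[OF assms] fold_create_scaled fold_create_basis_vec
      using that by (simp add: mult_ac)
  qed
  have "{ks. F ks \<noteq> 0} \<subseteq> ?lists"
    using F by (fastforce simp: F_def fun_eq_iff)
  moreover have "finite ?lists"
    by (rule finite_distinct_lists_length_eq)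
  ultimately have "Eop c E q p (ket K) = sum F ?lists"
    unfolding Eop_def F_def[symmetric] by (rule Sum_any.expand_superset[rotated])
  then show ?thesis
    by (simp add: sum_apply F)
qed

lemma sum_distinct_lists_by_set:
  assumes "distinct K"
  shows "(\<Sum>ks\<in>{ks. set ks \<subseteq> set K \<and> length ks = p \<and> distinct ks}. f ks)
    = (\<Sum>S\<in>{S. S \<subseteq> set K \<and> card S = p}. \<Sum>\<sigma>\<in>perms p. f (act \<sigma> (filter (\<lambda>x. x \<in> S) K)))"
proof -
  let ?lists = "{ks. set ks \<subseteq> set K \<and> length ks = p \<and> distinct ks}"
  let ?subsets = "{S. S \<subseteq> set K \<and> card S = p}"
  have "finite ?lists"
    by (rule finite_distinct_lists_length_eq)
  moreover have "finite ?subsets"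
    by (rule finite_subset[of _ "Pow (set K)"]) auto
  moreover have "set ` ?lists \<subseteq> ?subsets"
    by (auto simp: distinct_card)
  ultimately have "(\<Sum>ks\<in>?lists. f ks) = (\<Sum>S\<in>?subsets. \<Sum>ks\<in>{ks \<in> ?lists. set ks = S}. f ks)"
    by (rule sum.group[symmetric])
  also have "\<dots> = (\<Sum>S\<in>?subsets. \<Sum>\<sigma>\<in>perms p. f (act \<sigma> (filter (\<lambda>x. x \<in> S) K)))"
  proof (rule sum.cong[OF refl])
    fix S
    assume "S \<in> ?subsets"
    let ?J = "filter (\<lambda>x. x \<in> S) K"
    have "distinct ?J" and set_J: "set ?J = S"
      using assms \<open>S \<in> ?subsets\<close> by auto
    then have "length ?J = p"
      using \<open>S \<in> ?subsets\<close> distinct_card by fastforce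
    have "{ks \<in> ?lists. set ks = S} = {M. distinct M \<and> set M = set ?J}"
      using set_J \<open>S \<in> ?subsets\<close> by (auto simp: distinct_card)
    then show "(\<Sum>ks\<in>{ks \<in> ?lists. set ks = S}. f ks) = (\<Sum>\<sigma>\<in>perms p. f (act \<sigma> ?J))"
      using sum.reindex_bij_betw[OF bij_betw_act[OF \<open>distinct ?J\<close>], of f] \<open>length ?J = p\<close>
      by (simp add: perms_def)
  qed
  finally show ?thesis .
qed

lemma sum_lessThan_add_if_le:
  fixes m n :: nat and h :: "nat \<Rightarrow> 'a :: comm_monoid_add"
  shows "(\<Sum>e<m + n. if m \<le> e then h e else 0) = (\<Sum>e<n. h (m + e))"
  by (induction n) simp_all

lemma xi_Xpow_append:
  "xi E (Xpow (length L) P) (L @ M) = (\<Sum>e<length M. E (M ! e) * P e (L @ M))"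
proof -
  have "xi E (Xpow (length L) P) (L @ M) = (\<Sum>e<length L + length M.
      if length L \<le> e then E ((L @ M) ! e) * P (e - length L) (L @ M) else 0)"
    by (auto simp: xi_def Xpow_def intro!: sum.cong)
  then show ?thesis
    by (simp add: sum_lessThan_add_if_le nth_append)
qed

lemma xi_Xpow_conc_ga_act:
  "xi E (Xpow (length L) (conc L (ga_act p g J))) B
    = (\<Sum>\<sigma>\<in>perms p. (\<Sum>e<length J. E (act \<sigma> J ! e) * g \<sigma> e) * basis_vec (L @ act \<sigma> J) B)"
proof (cases "take (length L) B = L")
  case True
  then obtain M where B: "B = L @ M"
    by (metis append_take_drop_id)
  have "xi E (Xpow (length L) (conc L (ga_act p g J))) (L @ M)
      = (\<Sum>e<length M. \<Sum>\<sigma>\<in>perms p. if act \<sigma> J = M then E (M ! e) * g \<sigma> e else 0)"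
    by (auto simp: xi_Xpow_append conc_def ga_act_def sum_distrib_left intro!: sum.cong)
  also have "\<dots> = (\<Sum>\<sigma>\<in>perms p. \<Sum>e<length M. if act \<sigma> J = M then E (M ! e) * g \<sigma> e else 0)"
    by (rule sum.swap)
  also have "\<dots> = (\<Sum>\<sigma>\<in>perms p. (\<Sum>e<length J. E (act \<sigma> J ! e) * g \<sigma> e) * basis_vec (L @ act \<sigma> J) (L @ M))"
    by (rule sum.cong) (auto simp: basis_vec_def)
  finally show ?thesis
    by (simp add: B)
next
  case False
  then have "B \<noteq> L @ M" for M
    by auto
  moreover have "conc L P e B = 0" for P e
    using False by (simp add: conc_def)
  ultimately show ?thesis
    by (simp add: xi_def Xpow_def basis_vec_def cong: if_cong)
qed

lemma Rp_apply:
  "Rp c q p \<sigma> e = (\<Sum>\<rho>\<in>perms p. \<Sum>\<pi>\<in>perms p.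
    if \<rho> \<circ> \<pi> = \<sigma> then q ^ inv_count p \<rho> * Rsum c p \<pi> e else 0)"
proof -
  have "(\<Sum>a\<le>e. alpha q p \<rho> a * Rsum c p \<pi> (e - a)) = q ^ inv_count p \<rho> * Rsum c p \<pi> e"
    if "\<rho> \<in> perms p" for \<rho> \<pi>
    using that by (simp add: alpha_def if_distrib[of "\<lambda>x. x * _"] cong: if_cong)
  then show ?thesis
    unfolding Rp_def ga_mult_def by (intro sum.cong refl) auto
qed

lemma Rsum_energy:
  assumes "\<pi> \<in> perms p"
  shows "(\<Sum>e<p. E (M ! e) * Rsum c p \<pi> e) = weighted_energy c E p \<pi> M"
proof -
  have "(\<Sum>e<p. E (M ! e) * Rsum c p \<pi> e)
      = (\<Sum>e<p. \<Sum>i=1..p. if e = i - 1 then c p i \<pi> * E (M ! (i - 1)) else 0)"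
    using assms by (auto simp: Rsum_def sum_distrib_left intro!: sum.cong)
  also have "\<dots> = (\<Sum>i=1..p. \<Sum>e<p. if e = i - 1 then c p i \<pi> * E (M ! (i - 1)) else 0)"
    by (rule sum.swap)
  also have "\<dots> = weighted_energy c E p \<pi> M"
    by (auto simp: weighted_energy_def intro!: sum.cong)
  finally show ?thesis .
qed

lemma Rp_energy:
  "(\<Sum>e<p. E (M ! e) * Rp c q p \<sigma> e) = (\<Sum>\<rho>\<in>perms p. \<Sum>\<pi>\<in>perms p.
    if \<rho> \<circ> \<pi> = \<sigma> then q ^ inv_count p \<rho> * weighted_energy c E p \<pi> M else 0)"
proof -
  have "(\<Sum>e<p. E (M ! e) * Rp c q p \<sigma> e) = (\<Sum>e<p. \<Sum>\<rho>\<in>perms p. \<Sum>\<pi>\<in>perms p.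
      if \<rho> \<circ> \<pi> = \<sigma> then q ^ inv_count p \<rho> * (E (M ! e) * Rsum c p \<pi> e) else 0)"
    by (simp add: Rp_apply sum_distrib_left if_distrib mult_ac cong: if_cong)
  also have "\<dots> = (\<Sum>\<rho>\<in>perms p. \<Sum>\<pi>\<in>perms p. \<Sum>e<p.
      if \<rho> \<circ> \<pi> = \<sigma> then q ^ inv_count p \<rho> * (E (M ! e) * Rsum c p \<pi> e) else 0)"
    by (subst sum.swap) (simp add: sum.swap[of _ "{..<p}"])
  also have "\<dots> = (\<Sum>\<rho>\<in>perms p. \<Sum>\<pi>\<in>perms p.
      if \<rho> \<circ> \<pi> = \<sigma> then q ^ inv_count p \<rho> * weighted_energy c E p \<pi> M else 0)"
    by (intro sum.cong refl) (simp add: sum_distrib_left[symmetric] Rsum_energy)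
  finally show ?thesis .
qed

lemma perms_comp: "\<rho> \<in> perms p \<Longrightarrow> \<pi> \<in> perms p \<Longrightarrow> \<rho> \<circ> \<pi> \<in> perms p"
  unfolding perms_def by (simp add: permutes_compose)

lemma xi_Xpow_conc_Rp:
  assumes "length J = p"
  shows "xi E (Xpow (length L) (conc L (ga_act p (Rp c q p) J))) B = (\<Sum>\<rho>\<in>perms p. \<Sum>\<pi>\<in>perms p.
    q ^ inv_count p \<rho> * weighted_energy c E p \<pi> (act (\<rho> \<circ> \<pi>) J) * basis_vec (L @ act (\<rho> \<circ> \<pi>) J) B)"
proof -
  have "xi E (Xpow (length L) (conc L (ga_act p (Rp c q p) J))) B
      = (\<Sum>\<sigma>\<in>perms p. \<Sum>\<rho>\<in>perms p. \<Sum>\<pi>\<in>perms p. if \<rho> \<circ> \<pi> = \<sigma>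
          then q ^ inv_count p \<rho> * weighted_energy c E p \<pi> (act \<sigma> J) * basis_vec (L @ act \<sigma> J) B else 0)"
    unfolding xi_Xpow_conc_ga_act assms Rp_energy by (auto simp: sum_distrib_right intro!: sum.cong)
  also have "\<dots> = (\<Sum>\<rho>\<in>perms p. \<Sum>\<pi>\<in>perms p. \<Sum>\<sigma>\<in>perms p. if \<rho> \<circ> \<pi> = \<sigma>
          then q ^ inv_count p \<rho> * weighted_energy c E p \<pi> (act \<sigma> J) * basis_vec (L @ act \<sigma> J) B else 0)"
    by (subst sum.swap) (intro sum.cong refl sum.swap)
  also have "\<dots> = (\<Sum>\<rho>\<in>perms p. \<Sum>\<pi>\<in>perms p.
    q ^ inv_count p \<rho> * weighted_energy c E p \<pi> (act (\<rho> \<circ> \<pi>) J) * basis_vec (L @ act (\<rho> \<circ> \<pi>) J) B)"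
    by (intro sum.cong refl) (simp add: finite_perms perms_comp)
  finally show ?thesis .
qed

lemma xi_Xpow_sum:
  "xi E (Xpow m (\<Sum>x\<in>A. (\<lambda>e B. a x * P x e B))) B = (\<Sum>x\<in>A. a x * xi E (Xpow m (P x)) B)"
proof -
  have "(if m \<le> e then \<Sum>x\<in>A. a x * P x (e - m) B else 0)
      = (\<Sum>x\<in>A. a x * (if m \<le> e then P x (e - m) B else 0))" for e
    by simp
  then have "xi E (Xpow m (\<Sum>x\<in>A. (\<lambda>e B. a x * P x e B))) B
      = (\<Sum>e<length B. \<Sum>x\<in>A. a x * (E (B ! e) * (if m \<le> e then P x (e - m) B else 0)))"
    unfolding xi_def Xpow_def sum_apply by (simp add: sum_distrib_left mult.left_commute)
  also have "\<dots> = (\<Sum>x\<in>A. a x * xi E (Xpow m (P x)) B)"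
    unfolding xi_def Xpow_def sum_distrib_left by (rule sum.swap)
  finally show ?thesis .
qed

lemma annihilate_recreate_subset:
  assumes K: "distinct K" and S: "S \<subseteq> set K" "card S = p"
  defines "J \<equiv> filter (\<lambda>x. x \<in> S) K" and "L \<equiv> filter (\<lambda>x. x \<notin> S) K"
  shows "(\<Sum>\<sigma>\<in>perms p. \<Sum>\<pi>\<in>perms p. q ^ annih_exponent K (act \<sigma> J)
      * weighted_energy c E p \<pi> (act \<pi> (act \<sigma> J))
      * basis_vec (filter (\<lambda>x. x \<notin> set (act \<sigma> J)) K @ act \<pi> (act \<sigma> J)) B)
    = q ^ IA K (L @ J) * xi E (Xpow (length K - p) (conc L (ga_act p (Rp c q p) J))) B"
proof -
  have "distinct J" and set_J: "set J = S"
    using K S by (auto simp: J_def)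
  then have "length J = p"
    using S distinct_card by fastforce
  then have "length L = length K - p"
    using sum_length_filter_compl[of "\<lambda>x. x \<in> S" K] by (simp add: J_def L_def)
  have "(\<Sum>\<sigma>\<in>perms p. \<Sum>\<pi>\<in>perms p. q ^ annih_exponent K (act \<sigma> J)
      * weighted_energy c E p \<pi> (act \<pi> (act \<sigma> J))
      * basis_vec (filter (\<lambda>x. x \<notin> set (act \<sigma> J)) K @ act \<pi> (act \<sigma> J)) B)
    = (\<Sum>\<sigma>\<in>perms p. \<Sum>\<pi>\<in>perms p. q ^ IA K (L @ J) * (q ^ inv_count p \<sigma>
      * weighted_energy c E p \<pi> (act (\<sigma> \<circ> \<pi>) J) * basis_vec (L @ act (\<sigma> \<circ> \<pi>) J) B))"
  proof (intro sum.cong refl)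
    fix \<sigma> \<pi>
    assume "\<sigma> \<in> perms p" and "\<pi> \<in> perms p"
    then have \<sigma>: "\<sigma> permutes {1..length J}" and \<pi>: "\<pi> permutes {1..length J}"
      using \<open>length J = p\<close> by (simp_all add: perms_def)
    have "set (act \<sigma> J) = S"
      using distinct_set_act[OF \<open>distinct J\<close> \<sigma>] set_J by simp
    then show "q ^ annih_exponent K (act \<sigma> J) * weighted_energy c E p \<pi> (act \<pi> (act \<sigma> J))
        * basis_vec (filter (\<lambda>x. x \<notin> set (act \<sigma> J)) K @ act \<pi> (act \<sigma> J)) B
      = q ^ IA K (L @ J) * (q ^ inv_count p \<sigma>
        * weighted_energy c E p \<pi> (act (\<sigma> \<circ> \<pi>) J) * basis_vec (L @ act (\<sigma> \<circ> \<pi>) J) B)"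
      using annih_exponent_act[OF K J_def[THEN meta_eq_to_obj_eq] \<sigma>] \<open>length J = p\<close>
      by (simp add: act_comp[OF \<pi>] L_def power_add)
  qed
  also have "\<dots> = q ^ IA K (L @ J) * xi E (Xpow (length L) (conc L (ga_act p (Rp c q p) J))) B"
    by (simp add: xi_Xpow_conc_Rp[OF \<open>length J = p\<close>] sum_distrib_left mult.assoc)
  finally show ?thesis
    using \<open>length L = length K - p\<close> by simp
qed

theorem proposition1:
  fixes q :: complex and c :: "nat \<Rightarrow> nat \<Rightarrow> (nat \<Rightarrow> nat) \<Rightarrow> complex"
    and E :: "'m \<Rightarrow> complex" and K :: "'m list" and p :: nat
  assumes "distinct K" and "1 \<le> p" and "p \<le> length K"
  shows "Eop c E q p (ket K) =
    xi E (Xpow (length K - p)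
      (\<Sum>S\<in>{S. S \<subseteq> set K \<and> card S = p}.
        (\<lambda>e B. q ^ IA K (filter (\<lambda>x. x \<notin> S) K @ filter (\<lambda>x. x \<in> S) K) *
           conc (filter (\<lambda>x. x \<notin> S) K) (ga_act p (Rp c q p) (filter (\<lambda>x. x \<in> S) K)) e B)))"
proof (rule ext)
  fix B
  have "Eop c E q p (ket K) B = (\<Sum>S\<in>{S. S \<subseteq> set K \<and> card S = p}. \<Sum>\<sigma>\<in>perms p. \<Sum>\<pi>\<in>perms p.
      q ^ annih_exponent K (act \<sigma> (filter (\<lambda>x. x \<in> S) K))
      * weighted_energy c E p \<pi> (act \<pi> (act \<sigma> (filter (\<lambda>x. x \<in> S) K)))
      * basis_vec (filter (\<lambda>x. x \<notin> set (act \<sigma> (filter (\<lambda>x. x \<in> S) K))) K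
          @ act \<pi> (act \<sigma> (filter (\<lambda>x. x \<in> S) K))) B)"
    unfolding Eop_ket_apply[OF assms(1)] by (rule sum_distinct_lists_by_set[OF assms(1)])
  also have "\<dots> = (\<Sum>S\<in>{S. S \<subseteq> set K \<and> card S = p}.
      q ^ IA K (filter (\<lambda>x. x \<notin> S) K @ filter (\<lambda>x. x \<in> S) K) * xi E (Xpow (length K - p)
        (conc (filter (\<lambda>x. x \<notin> S) K) (ga_act p (Rp c q p) (filter (\<lambda>x. x \<in> S) K)))) B)"
    by (intro sum.cong refl annihilate_recreate_subset[OF assms(1)]) auto
  also have "\<dots> = xi E (Xpow (length K - p) (\<Sum>S\<in>{S. S \<subseteq> set K \<and> card S = p}.
      (\<lambda>e B. q ^ IA K (filter (\<lambda>x. x \<notin> S) K @ filter (\<lambda>x. x \<in> S) K) *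
        conc (filter (\<lambda>x. x \<notin> S) K) (ga_act p (Rp c q p) (filter (\<lambda>x. x \<in> S) K)) e B))) B"
    by (rule xi_Xpow_sum[symmetric])
  finally show "Eop c E q p (ket K) B = \<dots>" .
qed

end
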